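(* Let $d<\infty$, let $V\subset\mathbb{B}_d$ be an analytic disc attached to the unit sphere and $f$ its embedding map. Suppose $f(\xi)=f(\zeta)$ for two distinct $\xi,\zeta\in\mathbb{T}$. If $\varphi\in\mathcal{M}_f$ extends continuously to $\overline{\mathbb{D}}$, then $\varphi(\xi)=\varphi(\zeta)$.
   Context: $\mathbb{D}$ is the open unit disc, $\mathbb{T}$ the unit circle, $\mathbb{B}_d$ the open unit ball of $\mathbb{C}^d$. The Drury–Arveson space $H^2_d$ is the RKHS on $\mathbb{B}_d$ with kernel $1/(1-\langle z,w\rangle)$, with multiplier algebra $\mathcal{M}_d$. A variety is a common zero set in $\mathbb{B}_d$ of a family of functions from $\mathcal{M}_d$. An analytic disc attached to the unit sphere is a variety $V\subset\mathbb{B}_d$ ($d<\infty$) for which there is an injective analytic $f:\mathbb{D}\to\mathbb{B}_d$ with $f'(z)\neq0$ on $\mathbb{D}$, $V=f(\mathbb{D})$, $f$ extends to a $C^2$ map on $\overline{\mathbb{D}}$, and for $x\in\overline{\mathbb{D}}$, $\|f(x)\|=1$ iff $|x|=1$ ($f$ is the embedding map). $\mathcal{H}_f$ is the RKHS on $\mathbb{D}$ with kernel $k^f(z,w)=1/(1-\langle f(z),f(w)\rangle)$ and $\mathcal{M}_f$ its multiplier algebra. *)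

theory Defs
  imports "HOL-Analysis.Analysis"
begin

definition cinner :: "complex^'n \<Rightarrow> complex^'n \<Rightarrow> complex" where
  "cinner z w = (\<Sum>i\<in>UNIV. z $ i * cnj (w $ i))"

text \<open>The reproducing kernel Hilbert space of a (positive) kernel k on a set X,
  described as a set of functions: g belongs to H(k) iff the functional
  sum a_i k_{x_i} |-> sum a_i g(x_i) is bounded on the span of kernel functions
  (Aronszajn / Moore; cf. Paulsen--Raghupathi, Thm. 3.11).\<close>
definition rkhs :: "'a set \<Rightarrow> ('a \<Rightarrow> 'a \<Rightarrow> complex) \<Rightarrow> ('a \<Rightarrow> complex) set" where
  "rkhs X k = {g. \<exists>C::real. \<forall>(n::nat) (x::nat \<Rightarrow> 'a) (a::nat \<Rightarrow> complex).
      (\<forall>i<n. x i \<in> X) \<longrightarrow>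
      (cmod (\<Sum>i<n. a i * g (x i)))\<^sup>2
        \<le> C * Re (\<Sum>i<n. \<Sum>j<n. cnj (a i) * a j * k (x j) (x i))}"

definition multipliers :: "'a set \<Rightarrow> ('a \<Rightarrow> 'a \<Rightarrow> complex) \<Rightarrow> ('a \<Rightarrow> complex) set" where
  "multipliers X k = {\<phi>. \<forall>g\<in>rkhs X k. (\<lambda>x. \<phi> x * g x) \<in> rkhs X k}"

definition DA_kernel :: "complex^'n \<Rightarrow> complex^'n \<Rightarrow> complex" where
  "DA_kernel z w = 1 / (1 - cinner z w)"

definition DA_multipliers :: "(complex^'n \<Rightarrow> complex) set" where
  "DA_multipliers = multipliers (ball 0 1) DA_kernel"

definition DA_variety :: "(complex^'n) set \<Rightarrow> bool" where
  "DA_variety V \<longleftrightarrow> (\<exists>F \<subseteq> DA_multipliers. V = {z \<in> ball 0 1. \<forall>h\<in>F. h z = 0})"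

definition C2_on_closed_disc :: "(complex \<Rightarrow> complex^'n) \<Rightarrow> bool" where
  "C2_on_closed_disc f \<longleftrightarrow>
     (\<exists>(Df :: complex \<Rightarrow> (complex \<Rightarrow>\<^sub>L (complex^'n)))
        (D2f :: complex \<Rightarrow> (complex \<Rightarrow>\<^sub>L (complex \<Rightarrow>\<^sub>L (complex^'n)))).
        (\<forall>x\<in>cball 0 1. (f has_derivative blinfun_apply (Df x)) (at x within cball 0 1)) \<and>
        (\<forall>x\<in>cball 0 1. (Df has_derivative blinfun_apply (D2f x)) (at x within cball 0 1)) \<and>
        continuous_on (cball 0 1) D2f)"

text \<open>V is an analytic disc attached to the unit sphere with embedding map f
  (f is given together with its extension to the closed disc).\<close>
definition analytic_disc_attached ::
    "(complex^'n) set \<Rightarrow> (complex \<Rightarrow> complex^'n) \<Rightarrow> bool" where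
  "analytic_disc_attached V f \<longleftrightarrow>
     DA_variety V \<and>
     f ` ball 0 1 \<subseteq> ball 0 1 \<and>
     inj_on f (ball 0 1) \<and>
     (\<forall>i. (\<lambda>z. f z $ i) holomorphic_on ball 0 1) \<and>
     (\<forall>z\<in>ball 0 1. \<exists>i. deriv (\<lambda>w. f w $ i) z \<noteq> 0) \<and>
     V = f ` ball 0 1 \<and>
     C2_on_closed_disc f \<and>
     (\<forall>x\<in>cball 0 1. norm (f x) = 1 \<longleftrightarrow> cmod x = 1)"

definition kf :: "(complex \<Rightarrow> complex^'n) \<Rightarrow> complex \<Rightarrow> complex \<Rightarrow> complex" where
  "kf f z w = 1 / (1 - cinner (f z) (f w))"

definition Mf :: "(complex \<Rightarrow> complex^'n) \<Rightarrow> (complex \<Rightarrow> complex) set" where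
  "Mf f = multipliers (ball 0 1) (kf f)"

end

theory Submission
  imports Defs "HOL-Complex_Analysis.Conformal_Mappings"
begin

text \<open>Let p = f xi = f zeta. The function g = -Ln (1 - cinner (f -) p) lies in H_f, hence so does
  phi g, and the reproducing property gives |phi z - phi w| |g z| <= K ||k_z - cnj t k_w|| for all
  z, w in the disc and t in C. By the Hopf lemma, cinner (f -) p equals 1 - s + O(s^2) along
  suitably parametrised radii z_s -> xi and w_s -> zeta; this first-order agreement keeps
  min_t ||k_z_s - cnj t k_w_s|| bounded, whereas |g z_s| -> infinity. Hence
  phi z_s - phi w_s -> 0, and by continuity psi xi = psi zeta.\<close>

section \<open>The Hermitian inner product\<close>

lemma norm_vec_square: "(norm (x::complex^'n))^2 = (\<Sum>i\<in>UNIV. (cmod (x$i))^2)"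
  unfolding norm_vec_def L2_set_def by (simp add: sum_nonneg)

lemma cinner_self: "cinner x x = of_real ((norm x)^2)"
  unfolding cinner_def norm_vec_square of_real_sum
  by (rule sum.cong) (simp_all add: complex_norm_square[symmetric])

lemma cnj_cinner: "cnj (cinner x y) = cinner y x"
  unfolding cinner_def by (simp add: mult.commute)

lemma cinner_add_left: "cinner (x + y) z = cinner x z + cinner y z"
  unfolding cinner_def by (simp add: distrib_right sum.distrib)

lemma cinner_add_right: "cinner z (x + y) = cinner z x + cinner z y"
  unfolding cinner_def by (simp add: distrib_left sum.distrib)

lemma cinner_diff_left: "cinner (x - y) z = cinner x z - cinner y z"
  unfolding cinner_def by (simp add: left_diff_distrib sum_subtractf)

lemma cmod_sum_mult_square_le:
  fixes p q :: "'a \<Rightarrow> complex"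
  shows "(cmod (\<Sum>k\<in>A. p k * q k))^2 \<le> (\<Sum>k\<in>A. (cmod (p k))^2) * (\<Sum>k\<in>A. (cmod (q k))^2)"
proof -
  have "cmod (\<Sum>k\<in>A. p k * q k) \<le> (\<Sum>k\<in>A. \<bar>cmod (p k)\<bar> * \<bar>cmod (q k)\<bar>)"
    by (rule order_trans[OF norm_sum]) (simp add: norm_mult)
  also have "\<dots> \<le> L2_set (\<lambda>k. cmod (p k)) A * L2_set (\<lambda>k. cmod (q k)) A"
    by (rule L2_set_mult_ineq)
  finally have "(cmod (\<Sum>k\<in>A. p k * q k))^2 \<le> (L2_set (\<lambda>k. cmod (p k)) A * L2_set (\<lambda>k. cmod (q k)) A)^2"
    by (simp add: power_mono)
  also have "\<dots> = (\<Sum>k\<in>A. (cmod (p k))^2) * (\<Sum>k\<in>A. (cmod (q k))^2)"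
    unfolding power_mult_distrib L2_set_def by (simp add: sum_nonneg)
  finally show ?thesis .
qed

lemma cmod_cinner_le: "cmod (cinner x y) \<le> norm x * norm y"
proof -
  have "(cmod (cinner x y))^2 \<le> (\<Sum>k\<in>UNIV. (cmod (x$k))^2) * (\<Sum>k\<in>UNIV. (cmod (cnj (y$k)))^2)"
    unfolding cinner_def by (rule cmod_sum_mult_square_le)
  also have "\<dots> = (norm x * norm y)^2" by (simp add: norm_vec_square power_mult_distrib)
  finally show ?thesis
    by (meson mult_nonneg_nonneg norm_ge_zero power2_le_imp_le)
qed

lemma cmod_cinner_unit_le: "norm p = 1 \<Longrightarrow> cmod (cinner x p) \<le> norm x"
  using cmod_cinner_le[of x p] by simp

lemma norm_add_unit_square:
  assumes "norm p = 1"
  shows "(norm (p + z))^2 = 1 + 2 * Re (cinner z p) + (norm z)^2"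
proof -
  have pp: "cinner p p = 1" using assms by (simp add: cinner_self)
  have "complex_of_real ((norm (p + z))^2) = cinner (p + z) (p + z)" by (simp add: cinner_self)
  also have "\<dots> = 1 + cnj (cinner z p) + cinner z p + of_real ((norm z)^2)"
    unfolding cinner_add_left cinner_add_right pp by (simp add: cnj_cinner cinner_self)
  finally have "Re (of_real ((norm (p + z))^2)) = Re (1 + cnj (cinner z p) + cinner z p + of_real ((norm z)^2))"
    by (simp only:)
  then show ?thesis by simp
qed

section \<open>Estimates in reproducing kernel Hilbert spaces\<close>

text \<open>For t in C, kernel_gap k z w t is the squared norm of k_z - cnj t k_w in H(k).\<close>
definition kernel_gap :: "('a \<Rightarrow> 'a \<Rightarrow> complex) \<Rightarrow> 'a \<Rightarrow> 'a \<Rightarrow> complex \<Rightarrow> real" where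
  "kernel_gap k z w t = Re (k z z - t * k w z - cnj t * k z w + cnj t * t * k w w)"

lemma rkhs_two_point_le:
  assumes "h \<in> rkhs X k"
  obtains C where "\<And>z w t. z \<in> X \<Longrightarrow> w \<in> X \<Longrightarrow> (cmod (h z - t * h w))^2 \<le> C * kernel_gap k z w t"
proof -
  obtain C where C: "\<forall>(n::nat) (x::nat \<Rightarrow> _) (a::nat \<Rightarrow> complex).
      (\<forall>i<n. x i \<in> X) \<longrightarrow>
      (cmod (\<Sum>i<n. a i * h (x i)))\<^sup>2 \<le> C * Re (\<Sum>i<n. \<Sum>j<n. cnj (a i) * a j * k (x j) (x i))"
    using assms unfolding rkhs_def by blast
  show ?thesis
  proof (rule that)
    fix z w t assume "z \<in> X" "w \<in> X"
    define x where "x = (\<lambda>i::nat. if i = 0 then z else w)"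
    define a where "a = (\<lambda>i::nat. if i = 0 then (1::complex) else - t)"
    have "\<forall>i<2. x i \<in> X" using \<open>z \<in> X\<close> \<open>w \<in> X\<close> unfolding x_def by auto
    with C have "(cmod (\<Sum>i<2. a i * h (x i)))\<^sup>2 \<le> C * Re (\<Sum>i<2. \<Sum>j<2. cnj (a i) * a j * k (x j) (x i))"
      by blast
    also have "(\<Sum>i<2. a i * h (x i)) = h z - t * h w"
      by (simp add: numeral_2_eq_2 a_def x_def)
    also have "Re (\<Sum>i<2. \<Sum>j<2. cnj (a i) * a j * k (x j) (x i)) = kernel_gap k z w t"
      by (simp add: numeral_2_eq_2 a_def x_def kernel_gap_def)
    finally show "(cmod (h z - t * h w))^2 \<le> C * kernel_gap k z w t" .
  qed
qed

lemma multiplier_difference_le: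
  assumes "\<phi> \<in> multipliers X k" and "g \<in> rkhs X k" and "\<forall>w\<in>X. cmod (\<phi> w) \<le> B"
  obtains K where "0 \<le> K" "\<And>z w t. z \<in> X \<Longrightarrow> w \<in> X \<Longrightarrow>
    cmod (\<phi> z - \<phi> w) * cmod (g z) \<le> K * sqrt \<bar>kernel_gap k z w t\<bar>"
proof -
  have "(\<lambda>x. \<phi> x * g x) \<in> rkhs X k"
    using assms(1,2) unfolding multipliers_def by blast
  obtain C1 where C1: "\<And>z w t. z \<in> X \<Longrightarrow> w \<in> X \<Longrightarrow> (cmod (g z - t * g w))^2 \<le> C1 * kernel_gap k z w t"
    using rkhs_two_point_le[OF assms(2)] by blast
  obtain C2 where C2: "\<And>z w t. z \<in> X \<Longrightarrow> w \<in> X \<Longrightarrow>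
      (cmod (\<phi> z * g z - t * (\<phi> w * g w)))^2 \<le> C2 * kernel_gap k z w t"
    using rkhs_two_point_le[OF \<open>(\<lambda>x. \<phi> x * g x) \<in> rkhs X k\<close>] by blast
  have sqrt_le: "cmod A \<le> sqrt \<bar>C\<bar> * sqrt \<bar>Q\<bar>" if "(cmod A)^2 \<le> C * Q" for A C Q
  proof -
    have "(cmod A)^2 \<le> \<bar>C\<bar> * \<bar>Q\<bar>" using that by (metis abs_ge_self abs_mult order_trans)
    then have "cmod A \<le> sqrt (\<bar>C\<bar> * \<bar>Q\<bar>)" by (simp add: real_le_rsqrt)
    then show ?thesis by (simp add: real_sqrt_mult)
  qed
  show ?thesis
  proof (rule that[of "sqrt \<bar>C1\<bar> * \<bar>B\<bar> + sqrt \<bar>C2\<bar>"])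
    fix z w t assume z: "z \<in> X" and w: "w \<in> X"
    define Q where "Q = kernel_gap k z w t"
    have "(\<phi> z - \<phi> w) * g z = (\<phi> z * g z - t * (\<phi> w * g w)) - \<phi> w * (g z - t * g w)"
      by (simp add: algebra_simps)
    then have "cmod (\<phi> z - \<phi> w) * cmod (g z)
        \<le> cmod (\<phi> z * g z - t * (\<phi> w * g w)) + cmod (\<phi> w) * cmod (g z - t * g w)"
      by (metis norm_mult norm_triangle_ineq4)
    also have "\<dots> \<le> sqrt \<bar>C2\<bar> * sqrt \<bar>Q\<bar> + \<bar>B\<bar> * (sqrt \<bar>C1\<bar> * sqrt \<bar>Q\<bar>)"
      using sqrt_le[OF C1[OF z w]] sqrt_le[OF C2[OF z w]] assms(3) w unfolding Q_def
      by (intro add_mono mult_mono) (auto intro: order_trans[OF norm_ge_zero])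
    finally show "cmod (\<phi> z - \<phi> w) * cmod (g z) \<le> (sqrt \<bar>C1\<bar> * \<bar>B\<bar> + sqrt \<bar>C2\<bar>) * sqrt \<bar>Q\<bar>"
      by (simp add: algebra_simps)
  qed simp
qed

lemma cmod_sum_cinner_power_le:
  fixes y :: "nat \<Rightarrow> complex^'n" and p :: "complex^'n"
  assumes "norm p \<le> 1"
  shows "(cmod (\<Sum>i<n. a i * cinner (y i) p ^ m))^2
         \<le> Re (\<Sum>i<n. \<Sum>j<n. cnj (a i) * a j * cinner (y j) (y i) ^ m)"
proof (induction m arbitrary: a)
  case 0
  have "(\<Sum>i<n. \<Sum>j<n. cnj (a i) * a j) = cnj (\<Sum>i<n. a i) * (\<Sum>i<n. a i)"
    by (simp add: sum_product)
  also have "\<dots> = of_real ((cmod (\<Sum>i<n. a i))^2)"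
    using complex_norm_square[of "\<Sum>i<n. a i"] by (simp add: mult.commute)
  finally show ?case by simp
next
  case (Suc m)
  define u where "u i = cinner (y i) p" for i
  define B where "B k = (\<Sum>i<n. a i * y i $ k * u i ^ m)" for k
  have "(\<Sum>i<n. a i * u i ^ Suc m) = (\<Sum>i<n. \<Sum>k\<in>UNIV. cnj (p $ k) * (a i * y i $ k * u i ^ m))"
    unfolding u_def cinner_def power_Suc
    by (rule sum.cong) (auto simp: sum_distrib_left sum_distrib_right intro!: sum.cong)
  also have "\<dots> = (\<Sum>k\<in>UNIV. cnj (p $ k) * B k)"
    unfolding B_def by (subst sum.swap) (simp add: sum_distrib_left)
  finally have "(cmod (\<Sum>i<n. a i * u i ^ Suc m))^2 = (cmod (\<Sum>k\<in>UNIV. cnj (p $ k) * B k))^2"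
    by simp
  also have "\<dots> \<le> (\<Sum>k\<in>UNIV. (cmod (cnj (p $ k)))^2) * (\<Sum>k\<in>UNIV. (cmod (B k))^2)"
    by (rule cmod_sum_mult_square_le)
  also have "\<dots> \<le> (\<Sum>k\<in>UNIV. (cmod (B k))^2)"
  proof (rule mult_left_le_one_le)
    show "(\<Sum>k\<in>UNIV. (cmod (cnj (p $ k)))^2) \<le> 1"
      using assms by (simp add: norm_vec_square[symmetric] power_le_one)
  qed (auto intro: sum_nonneg)
  also have "\<dots> \<le> (\<Sum>k\<in>UNIV. Re (\<Sum>i<n. \<Sum>j<n. cnj (a i * y i $ k) * (a j * y j $ k) * cinner (y j) (y i) ^ m))"
  proof (rule sum_mono)
    fix k
    show "(cmod (B k))^2 \<le> Re (\<Sum>i<n. \<Sum>j<n. cnj (a i * y i $ k) * (a j * y j $ k) * cinner (y j) (y i) ^ m)"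
      using Suc.IH[of "\<lambda>i. a i * y i $ k"] unfolding B_def u_def by (simp add: mult.assoc)
  qed
  also have "\<dots> = Re (\<Sum>k\<in>UNIV. \<Sum>i<n. \<Sum>j<n. cnj (a i * y i $ k) * (a j * y j $ k) * cinner (y j) (y i) ^ m)"
    by simp
  also have "(\<Sum>k\<in>UNIV. \<Sum>i<n. \<Sum>j<n. cnj (a i * y i $ k) * (a j * y j $ k) * cinner (y j) (y i) ^ m)
      = (\<Sum>i<n. \<Sum>j<n. \<Sum>k\<in>UNIV. cnj (a i * y i $ k) * (a j * y j $ k) * cinner (y j) (y i) ^ m)"
    by (subst sum.swap) (rule sum.cong, simp, subst sum.swap, simp)
  also have "\<dots> = (\<Sum>i<n. \<Sum>j<n. cnj (a i) * a j * cinner (y j) (y i) ^ Suc m)"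
    unfolding cinner_def power_Suc
    by (intro sum.cong refl) (simp add: sum_distrib_left sum_distrib_right mult_ac)
  finally show ?case unfolding u_def .
qed

text \<open>The hypothesis on h says that each h m lies in the closed unit ball of H(K m).\<close>
lemma in_rkhs_if_weighted_series:
  fixes K :: "nat \<Rightarrow> 'a \<Rightarrow> 'a \<Rightarrow> complex" and h :: "nat \<Rightarrow> 'a \<Rightarrow> complex" and c :: "nat \<Rightarrow> complex"
  assumes K: "\<And>x y. x \<in> X \<Longrightarrow> y \<in> X \<Longrightarrow> (\<lambda>m. K m x y) sums k x y"
    and h: "\<And>m (n::nat) x a. \<forall>i<n. x i \<in> X \<Longrightarrow>
      (cmod (\<Sum>i<n. a i * h m (x i)))^2 \<le> Re (\<Sum>i<n. \<Sum>j<n. cnj (a i) * a j * K m (x j) (x i))"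
    and g: "\<And>x. x \<in> X \<Longrightarrow> (\<lambda>m. c m * h m x) sums g x"
    and c: "summable (\<lambda>m. (cmod (c m))^2)"
  shows "g \<in> rkhs X k"
  unfolding rkhs_def
proof (intro CollectI exI[of _ "\<Sum>m. (cmod (c m))^2"] allI impI)
  fix n :: nat and x :: "nat \<Rightarrow> 'a" and a :: "nat \<Rightarrow> complex"
  assume x: "\<forall>i<n. x i \<in> X"
  define Z where "Z = (\<Sum>m. (cmod (c m))^2)"
  define S where "S m = (\<Sum>i<n. \<Sum>j<n. cnj (a i) * a j * K m (x j) (x i))" for m
  define T where "T = (\<Sum>i<n. \<Sum>j<n. cnj (a i) * a j * k (x j) (x i))"
  define A where "A m = (\<Sum>i<n. a i * h m (x i))" for m
  have "S sums T"
    unfolding S_def T_def using x by (intro sums_sum sums_mult K) auto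
  then have ReS: "(\<lambda>m. Re (S m)) sums Re T" by (rule sums_Re)
  have AS: "(cmod (A m))^2 \<le> Re (S m)" for m
    unfolding A_def S_def by (rule h[OF x])
  have G: "(\<lambda>m. c m * A m) sums (\<Sum>i<n. a i * g (x i))"
    unfolding A_def sum_distrib_left using x
    by (subst mult.left_commute, intro sums_sum sums_mult g) auto
  have bound: "(cmod (\<Sum>m<N. c m * A m))^2 \<le> Z * Re T" for N
  proof -
    have "(cmod (\<Sum>m<N. c m * A m))^2 \<le> (\<Sum>m<N. (cmod (c m))^2) * (\<Sum>m<N. (cmod (A m))^2)"
      by (rule cmod_sum_mult_square_le)
    also have "\<dots> \<le> Z * Re T"
    proof (rule mult_mono)
      show "(\<Sum>m<N. (cmod (c m))^2) \<le> Z"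
        unfolding Z_def by (rule sum_le_suminf[OF c]) auto
      have "(\<Sum>m<N. (cmod (A m))^2) \<le> (\<Sum>m<N. Re (S m))"
        by (rule sum_mono) (rule AS)
      also have "\<dots> \<le> Re T"
        using sum_le_suminf[OF sums_summable[OF ReS], of "{..<N}"] sums_unique[OF ReS]
          order_trans[OF zero_le_power2 AS] by auto
      finally show "(\<Sum>m<N. (cmod (A m))^2) \<le> Re T" .
      show "0 \<le> Z" unfolding Z_def by (rule suminf_nonneg[OF c]) simp
    qed (auto intro: sum_nonneg)
    finally show ?thesis .
  qed
  have "(\<lambda>N. (cmod (\<Sum>m<N. c m * A m))^2) \<longlonglongrightarrow> (cmod (\<Sum>i<n. a i * g (x i)))^2"
    using G unfolding sums_def by (intro tendsto_intros)
  then show "(cmod (\<Sum>i<n. a i * g (x i)))^2 \<le> (\<Sum>m. (cmod (c m))^2) * Re (\<Sum>i<n. \<Sum>j<n. cnj (a i) * a j * k (x j) (x i))"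
    unfolding T_def[symmetric] Z_def[symmetric] by (rule LIMSEQ_le_const2) (use bound in auto)
qed

text \<open>The series -Ln(1 - u) = sum u^m/m, with u = cinner (f z) p, has square-summable coefficients,
  and kf f is the sum of the kernels cinner^m.\<close>
lemma minus_Ln_in_rkhs_kf:
  fixes f :: "complex \<Rightarrow> complex^'n" and p :: "complex^'n"
  assumes fX: "\<forall>z\<in>X. norm (f z) < 1" and p: "norm p \<le> 1"
  shows "(\<lambda>z. - Ln (1 - cinner (f z) p)) \<in> rkhs X (kf f)"
proof (rule in_rkhs_if_weighted_series)
  have lt1: "cmod (cinner (f x) q) < 1" if "x \<in> X" "norm q \<le> 1" for x q
    using cmod_cinner_le[of "f x" q] fX that mult_left_le[of "norm q" "norm (f x)"] by force
  show "(\<lambda>m. cinner (f x) (f y) ^ m) sums kf f x y" if "x \<in> X" "y \<in> X" for x y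
    unfolding kf_def using lt1 fX that by (intro geometric_sums) (auto simp: less_imp_le)
  show "(cmod (\<Sum>i<n. a i * cinner (f (x i)) p ^ m))^2
      \<le> Re (\<Sum>i<n. \<Sum>j<n. cnj (a i) * a j * cinner (f (x j)) (f (x i)) ^ m)" for m and n :: nat and x a
    by (rule cmod_sum_cinner_power_le[OF p, where y = "\<lambda>i. f (x i)"])
  show "(\<lambda>m. 1 / of_nat m * cinner (f x) p ^ m) sums - Ln (1 - cinner (f x) p)" if "x \<in> X" for x
  proof -
    have "(\<lambda>m. - ((- (- cinner (f x) p))^m) / of_nat m) sums ln (1 + - cinner (f x) p)"
      using lt1[OF that p] by (intro Ln_series') auto
    then show ?thesis using sums_minus by fastforce
  qed
  show "summable (\<lambda>m. (cmod (1 / of_nat m :: complex))^2)"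
    using inverse_power_summable[of 2, where 'a = real] by (simp add: norm_divide power_divide inverse_eq_divide)
qed

lemma Mf_difference_times_Ln_le:
  fixes f :: "complex \<Rightarrow> complex^'n"
  assumes "\<phi> \<in> Mf f" and "\<forall>w\<in>ball 0 1. cmod (\<phi> w) \<le> B"
    and "\<forall>z\<in>ball 0 1. norm (f z) < 1" and "norm p \<le> 1"
  obtains K where "0 \<le> K" "\<And>z w t. z \<in> ball 0 1 \<Longrightarrow> w \<in> ball 0 1 \<Longrightarrow>
    cmod (\<phi> z - \<phi> w) * cmod (Ln (1 - cinner (f z) p)) \<le> K * sqrt \<bar>kernel_gap (kf f) z w t\<bar>"
proof -
  have "(\<lambda>z. - Ln (1 - cinner (f z) p)) \<in> rkhs (ball 0 1) (kf f)"
    using minus_Ln_in_rkhs_kf assms(3,4) by blast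
  from multiplier_difference_le[OF assms(1)[unfolded Mf_def] this assms(2)] that show ?thesis
    by (metis norm_minus_cancel)
qed

lemma kernel_gap_kf:
  fixes f :: "complex \<Rightarrow> complex^'n"
  assumes "norm (f z) < 1" and "norm (f w) < 1"
  shows "kernel_gap (kf f) z w (kf f z w / kf f w w)
       = 1 / (1 - (norm (f z))^2) - (1 - (norm (f w))^2) / (cmod (1 - cinner (f z) (f w)))^2"
proof -
  define a where "a = 1 - cinner (f z) (f w)"
  define D1 where "D1 = 1 - (norm (f z))^2"
  define D2 where "D2 = 1 - (norm (f w))^2"
  have "cmod (cinner (f z) (f w)) < 1"
    using cmod_cinner_le[of "f z" "f w"] assms
    by (metis le_less_trans mult_left_le norm_ge_zero order_less_imp_le)
  then have a: "a \<noteq> 0" unfolding a_def by auto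
  have D2: "D2 \<noteq> 0" unfolding D2_def using power_strict_mono[OF assms(2) norm_ge_zero, of 2] by simp
  have k: "kf f z z = 1 / of_real D1" "kf f w w = 1 / of_real D2" "kf f z w = 1 / a" "kf f w z = 1 / cnj a"
    unfolding kf_def D1_def D2_def a_def by (simp_all add: cinner_self cnj_cinner)
  have t: "kf f z w / kf f w w = of_real D2 / a" using k by simp
  have aa: "a * cnj a = of_real ((cmod a)^2)" by (rule complex_norm_square[symmetric])
  have "kf f z z - (kf f z w / kf f w w) * kf f w z - cnj (kf f z w / kf f w w) * kf f z w
      + cnj (kf f z w / kf f w w) * (kf f z w / kf f w w) * kf f w w
      = 1 / of_real D1 - of_real D2 / (a * cnj a) - of_real D2 / (a * cnj a) + of_real D2 / (a * cnj a)"
    unfolding t k using a D2 by (simp add: field_simps)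
  then show ?thesis
    unfolding kernel_gap_def D1_def[symmetric] D2_def[symmetric] a_def[symmetric] aa by simp
qed

section \<open>The embedding map near the boundary\<close>

lemma C2_on_closed_disc_continuous_on:
  "C2_on_closed_disc f \<Longrightarrow> continuous_on (cball 0 1) f"
  unfolding C2_on_closed_disc_def continuous_on_eq_continuous_within
  using has_derivative_continuous by blast

lemma taylor_bound_lipschitz_derivative:
  fixes f :: "'a::real_normed_vector \<Rightarrow> 'b::real_normed_vector" and Df :: "'a \<Rightarrow> 'a \<Rightarrow>\<^sub>L 'b"
  assumes S: "convex S" and Df: "\<forall>x\<in>S. (f has_derivative Df x) (at x within S)"
    and lip: "\<forall>x\<in>S. \<forall>y\<in>S. norm (Df x - Df y) \<le> B * norm (x - y)" and "0 \<le> B"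
    and x: "x \<in> S" and y: "y \<in> S"
  shows "norm (f y - f x - Df x (y - x)) \<le> B * (norm (y - x))^2"
proof -
  have seg: "closed_segment x y \<subseteq> S"
    by (rule closed_segment_subset[OF x y S])
  have "norm (f y - f x - Df x (y - x)) \<le> norm (y - x) * (B * norm (y - x))"
  proof (rule differentiable_bound_linearization[of x y "closed_segment x y" f "\<lambda>z. blinfun_apply (Df z)" x])
    show "x + t *\<^sub>R (y - x) \<in> closed_segment x y" if "t \<in> {0..1}" for t
      using that unfolding closed_segment_def
      by (intro CollectI exI[of _ t]) (auto simp: algebra_simps)
    show "(f has_derivative blinfun_apply (Df z)) (at z within closed_segment x y)"
      if "z \<in> closed_segment x y" for z
      using Df seg that by (meson has_derivative_subset subsetD)
    show "onorm (blinfun_apply (Df z) - blinfun_apply (Df x)) \<le> B * norm (y - x)"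
      if z: "z \<in> closed_segment x y" for z
    proof -
      have "blinfun_apply (Df z) - blinfun_apply (Df x) = blinfun_apply (Df z - Df x)"
        by (auto simp: fun_eq_iff blinfun.diff_left)
      then have "onorm (blinfun_apply (Df z) - blinfun_apply (Df x)) = norm (Df z - Df x)"
        by (simp add: norm_blinfun.rep_eq)
      also have "\<dots> \<le> B * norm (z - x)" using lip seg z x by auto
      also have "\<dots> \<le> B * norm (y - x)"
        using segment_bound(1)[OF z] \<open>0 \<le> B\<close> by (intro mult_left_mono) auto
      finally show ?thesis .
    qed
  qed auto
  then show ?thesis by (simp add: power2_eq_square mult_ac)
qed

lemma C2_on_closed_disc_taylor:
  fixes f :: "complex \<Rightarrow> complex^'n"
  assumes "C2_on_closed_disc f"
  obtains Df :: "complex \<Rightarrow> (complex \<Rightarrow>\<^sub>L (complex^'n))" and M :: real where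
   "\<forall>x\<in>cball 0 1. (f has_derivative blinfun_apply (Df x)) (at x within cball 0 1)"
   "continuous_on (cball 0 1) Df"
   "0 \<le> M"
   "\<forall>x\<in>cball 0 1. \<forall>y\<in>cball 0 1. norm (f y - f x - Df x (y - x)) \<le> M * (norm (y - x))^2"
proof -
  obtain Df :: "complex \<Rightarrow> (complex \<Rightarrow>\<^sub>L (complex^'n))"
     and D2f :: "complex \<Rightarrow> (complex \<Rightarrow>\<^sub>L (complex \<Rightarrow>\<^sub>L (complex^'n)))"
    where Df: "\<forall>x\<in>cball 0 1. (f has_derivative blinfun_apply (Df x)) (at x within cball 0 1)"
      and D2f: "\<forall>x\<in>cball 0 1. (Df has_derivative blinfun_apply (D2f x)) (at x within cball 0 1)"
      and cD2f: "continuous_on (cball 0 1) D2f"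
    using assms unfolding C2_on_closed_disc_def by blast
  have cDf: "continuous_on (cball 0 1) Df"
    unfolding continuous_on_eq_continuous_within
    using D2f has_derivative_continuous by blast
  have "compact (D2f ` cball 0 1)" by (rule compact_continuous_image[OF cD2f]) simp
  then obtain B where B: "B > 0" "\<forall>y\<in>D2f ` cball 0 1. norm y \<le> B"
    using compact_imp_bounded bounded_pos by metis
  have lip: "\<forall>x\<in>cball 0 1. \<forall>y\<in>cball 0 1. norm (Df x - Df y) \<le> B * norm (x - y)"
    using differentiable_bound[of "cball 0 1" Df "\<lambda>x. blinfun_apply (D2f x)" B] D2f B
    by (auto simp: norm_blinfun.rep_eq[symmetric])
  show ?thesis
    using taylor_bound_lipschitz_derivative[OF convex_cball Df lip] B
    by (intro that[OF Df cDf, of B]) auto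
qed

lemma derivative_complex_linear_on_closed_disc:
  fixes f :: "complex \<Rightarrow> complex^'n" and Df :: "complex \<Rightarrow> (complex \<Rightarrow>\<^sub>L (complex^'n))"
  assumes hol: "\<forall>i. (\<lambda>z. f z $ i) holomorphic_on ball 0 1"
    and Df: "\<forall>x\<in>cball 0 1. (f has_derivative blinfun_apply (Df x)) (at x within cball 0 1)"
    and cDf: "continuous_on (cball 0 1) Df"
    and x: "x \<in> cball 0 1"
  shows "Df x (c * h) $ j = c * (Df x h $ j)"
proof -
  have interior: "Df x (c * h) $ j - c * (Df x h $ j) = 0" if x: "x \<in> ball 0 1" for x
  proof -
    have "at x within cball 0 1 = at x" using x by (intro at_within_interior) simp
    then have "(f has_derivative blinfun_apply (Df x)) (at x)" using Df x by (metis ball_subset_cball subsetD)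
    then have a: "((\<lambda>z. f z $ j) has_derivative (\<lambda>h. Df x h $ j)) (at x)"
      by (rule bounded_linear.has_derivative[OF bounded_linear_vec_nth])
    have "(\<lambda>z. f z $ j) field_differentiable at x"
      using hol x by (meson holomorphic_on_imp_differentiable_at open_ball)
    then have "((\<lambda>z. f z $ j) has_field_derivative deriv (\<lambda>z. f z $ j) x) (at x)"
      by (simp add: DERIV_deriv_iff_field_differentiable)
    then have b: "((\<lambda>z. f z $ j) has_derivative (\<lambda>h. deriv (\<lambda>z. f z $ j) x * h)) (at x)"
      by (simp add: has_field_derivative_def)
    have "(\<lambda>h. Df x h $ j) = (\<lambda>h. deriv (\<lambda>z. f z $ j) x * h)"
      by (rule has_derivative_unique[OF a b])
    then show ?thesis by (metis mult.left_commute right_minus_eq)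
  qed
  have "continuous_on (closure (ball 0 1)) (\<lambda>x. Df x (c * h) $ j - c * (Df x h $ j))"
    using cDf by (auto intro!: continuous_intros)
  from continuous_constant_on_closure[OF this interior] x show ?thesis by simp
qed

lemma norm_radial_point:
  "cmod \<eta> = 1 \<Longrightarrow> 0 \<le> s \<Longrightarrow> s \<le> 1 \<Longrightarrow> cmod ((1 - of_real s) * \<eta>) = 1 - s"
proof -
  assume "cmod \<eta> = 1" "0 \<le> s" "s \<le> 1"
  have "1 - complex_of_real s = of_real (1 - s)" by simp
  then show ?thesis using \<open>cmod \<eta> = 1\<close> \<open>s \<le> 1\<close> by (simp only: norm_mult norm_of_real) simp
qed

lemma radial_point_in_ball:
  "cmod \<eta> = 1 \<Longrightarrow> 0 < s \<Longrightarrow> s \<le> 1 \<Longrightarrow> (1 - of_real s) * \<eta> \<in> ball 0 1"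
  by (simp add: norm_radial_point)

lemma cinner_radial_taylor:
  fixes f :: "complex \<Rightarrow> complex^'n" and Df :: "complex \<Rightarrow> (complex \<Rightarrow>\<^sub>L (complex^'n))"
  assumes hol: "\<forall>i. (\<lambda>z. f z $ i) holomorphic_on ball 0 1"
    and Df: "\<forall>x\<in>cball 0 1. (f has_derivative blinfun_apply (Df x)) (at x within cball 0 1)"
    and cDf: "continuous_on (cball 0 1) Df"
    and taylor: "\<forall>x\<in>cball 0 1. \<forall>y\<in>cball 0 1. norm (f y - f x - Df x (y - x)) \<le> M * (norm (y - x))^2"
    and \<eta>: "cmod \<eta> = 1" and p: "f \<eta> = p" "norm p = 1" and \<sigma>: "cmod (1 + \<sigma>) \<le> 1"
  shows "cmod (cinner (f ((1 + \<sigma>) * \<eta>)) p - (1 + \<sigma> * cinner (Df \<eta> \<eta>) p)) \<le> M * (cmod \<sigma>)^2"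
    and "norm (f ((1 + \<sigma>) * \<eta>) - p) \<le> norm (Df \<eta>) * cmod \<sigma> + M * (cmod \<sigma>)^2"
proof -
  have "\<eta> \<in> cball 0 1" "(1 + \<sigma>) * \<eta> \<in> cball 0 1" using \<sigma> \<eta> by (simp_all add: norm_mult)
  define E where "E = f ((1 + \<sigma>) * \<eta>) - p - Df \<eta> (\<sigma> * \<eta>)"
  have "norm (f ((1 + \<sigma>) * \<eta>) - f \<eta> - Df \<eta> ((1 + \<sigma>) * \<eta> - \<eta>)) \<le> M * (norm ((1 + \<sigma>) * \<eta> - \<eta>))^2"
    using taylor \<open>\<eta> \<in> cball 0 1\<close> \<open>(1 + \<sigma>) * \<eta> \<in> cball 0 1\<close> by blast
  moreover have "(1 + \<sigma>) * \<eta> - \<eta> = \<sigma> * \<eta>" by (simp add: algebra_simps)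
  ultimately have "norm E \<le> M * (norm (\<sigma> * \<eta>))^2" unfolding E_def p(1) by simp
  then have E: "norm E \<le> M * (cmod \<sigma>)^2" using \<eta> by (simp add: norm_mult)
  have "Df \<eta> (\<sigma> * \<eta>) $ j = \<sigma> * (Df \<eta> \<eta> $ j)" for j
    by (rule derivative_complex_linear_on_closed_disc[OF hol Df cDf \<open>\<eta> \<in> cball 0 1\<close>])
  then have "cinner (Df \<eta> (\<sigma> * \<eta>)) p = \<sigma> * cinner (Df \<eta> \<eta>) p"
    unfolding cinner_def by (simp add: sum_distrib_left mult.assoc)
  moreover have "cinner p p = 1" using p by (simp add: cinner_self)
  moreover have "f ((1 + \<sigma>) * \<eta>) = p + Df \<eta> (\<sigma> * \<eta>) + E" unfolding E_def by simp
  ultimately have "cinner (f ((1 + \<sigma>) * \<eta>)) p - (1 + \<sigma> * cinner (Df \<eta> \<eta>) p) = cinner E p"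
    by (simp add: cinner_add_left)
  then show "cmod (cinner (f ((1 + \<sigma>) * \<eta>)) p - (1 + \<sigma> * cinner (Df \<eta> \<eta>) p)) \<le> M * (cmod \<sigma>)^2"
    using cmod_cinner_unit_le[OF p(2), of E] E by simp
  have "norm (Df \<eta> (\<sigma> * \<eta>)) \<le> norm (Df \<eta>) * cmod \<sigma>"
    using norm_blinfun[of "Df \<eta>" "\<sigma> * \<eta>"] \<eta> by (simp add: norm_mult)
  then show "norm (f ((1 + \<sigma>) * \<eta>) - p) \<le> norm (Df \<eta>) * cmod \<sigma> + M * (cmod \<sigma>)^2"
    using E norm_triangle_ineq[of "Df \<eta> (\<sigma> * \<eta>)" E] unfolding E_def by (simp add: algebra_simps)
qed

lemma moebius_denominator_nonzero:
  fixes a b :: complex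
  assumes "cmod a < 1" "cmod b < 1"
  shows "1 - cnj a * b \<noteq> 0"
proof
  assume "1 - cnj a * b = 0"
  then have "cmod (cnj a * b) = 1" by (metis eq_iff_diff_eq_0 norm_one)
  moreover have "cmod a * cmod b < 1"
    using assms by (metis mult_le_one norm_ge_zero less_le_not_le le_less_trans mult_left_le)
  ultimately show False by (simp add: norm_mult)
qed

lemma one_minus_cmod_moebius_square:
  fixes a b :: complex
  assumes "cmod a < 1" "cmod b < 1"
  shows "1 - (cmod ((b - a) / (1 - cnj a * b)))^2
    = (1 - (cmod a)^2) * (1 - (cmod b)^2) / (cmod (1 - cnj a * b))^2"
proof -
  have "(cmod (1 - cnj a * b))^2 > 0" using moebius_denominator_nonzero[OF assms] by simp
  moreover have "(cmod (1 - cnj a * b))^2 - (cmod (b - a))^2 = (1 - (cmod a)^2) * (1 - (cmod b)^2)"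
    unfolding cmod_power2 by (simp add: power2_eq_square algebra_simps)
  ultimately show ?thesis by (simp add: norm_divide power_divide field_simps)
qed

lemma Schwarz_Pick_at_origin:
  assumes hol: "u holomorphic_on ball 0 1" and ub: "\<forall>z\<in>ball 0 1. cmod (u z) < 1"
    and z: "z \<in> ball 0 1"
  shows "cmod ((u z - u 0) / (1 - cnj (u 0) * u z)) \<le> cmod z"
proof -
  define a where "a = u 0"
  have a: "cmod a < 1" using ub unfolding a_def by auto
  define v where "v z = (u z - a) / (1 - cnj a * u z)" for z
  have "v holomorphic_on ball 0 1"
    unfolding v_def using moebius_denominator_nonzero a ub by (intro holomorphic_intros hol) auto
  moreover have "v 0 = 0" unfolding v_def a_def by simp
  moreover have "cmod (v z) < 1" if "cmod z < 1" for z
  proof -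
    have "z \<in> ball 0 1" using that by simp
    then have "0 < (1 - (cmod a)^2) * (1 - (cmod (u z))^2) / (cmod (1 - cnj a * u z))^2"
      using a ub moebius_denominator_nonzero[OF a]
      by (intro divide_pos_pos mult_pos_pos) (auto simp: abs_square_less_1)
    then have "(cmod (v z))^2 < 1"
      using one_minus_cmod_moebius_square[OF a] ub \<open>z \<in> ball 0 1\<close> unfolding v_def by fastforce
    then show ?thesis by (simp add: abs_square_less_1)
  qed
  ultimately show ?thesis using Schwarz_Lemma(1) z unfolding v_def a_def by force
qed

lemma Schwarz_Pick_lower_bound:
  assumes hol: "u holomorphic_on ball 0 1" and ub: "\<forall>z\<in>ball 0 1. cmod (u z) < 1"
  obtains c where "c > 0" "\<forall>z\<in>ball 0 1. c * (1 - (cmod z)^2) \<le> 1 - (cmod (u z))^2"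
proof -
  define a where "a = u 0"
  have a: "cmod a < 1" using ub unfolding a_def by auto
  define c where "c = (1 - cmod a) / (1 + cmod a)"
  have "c > 0" unfolding c_def using a norm_ge_zero[of a] by (intro divide_pos_pos) linarith+
  show ?thesis
  proof (rule that[OF \<open>c > 0\<close>], intro ballI)
    fix z :: complex assume z: "z \<in> ball 0 1"
    then have uz: "cmod (u z) < 1" using ub by blast
    have "1 - cmod a \<le> cmod (1 - cnj a * u z)"
      using norm_triangle_ineq2[of 1 "cnj a * u z"] mult_left_le[of "cmod (u z)" "cmod a"] uz
      by (simp add: norm_mult)
    moreover have "1 - (cmod z)^2 \<le> 1 - (cmod ((u z - a) / (1 - cnj a * u z)))^2"
      using Schwarz_Pick_at_origin[OF hol ub z] unfolding a_def by (simp add: power_mono)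
    moreover have "0 < 1 - (cmod a)^2" "0 \<le> 1 - (cmod z)^2"
      using a z by (simp_all add: abs_square_less_1 abs_square_le_1 less_imp_le)
    moreover have "c * (1 - (cmod z)^2) = (1 - cmod a)^2 * (1 - (cmod z)^2) / (1 - (cmod a)^2)"
    proof -
      have "1 - (cmod a)^2 = (1 - cmod a) * (1 + cmod a)" by (simp add: power2_eq_square algebra_simps)
      moreover have "1 - cmod a \<noteq> 0" "1 + cmod a \<noteq> 0" using a norm_ge_zero[of a] by linarith+
      ultimately show ?thesis unfolding c_def power2_eq_square[of "1 - cmod a"] by (simp add: divide_simps)
    qed
    ultimately have "c * (1 - (cmod z)^2)
        \<le> (cmod (1 - cnj a * u z))^2 * (1 - (cmod ((u z - a) / (1 - cnj a * u z)))^2) / (1 - (cmod a)^2)"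
      using a by (auto intro!: divide_right_mono mult_mono power_mono)
    also have "\<dots> = 1 - (cmod (u z))^2"
      using one_minus_cmod_moebius_square[OF a uz] moebius_denominator_nonzero[OF a uz]
        \<open>0 < 1 - (cmod a)^2\<close> by (simp add: field_simps)
    finally show "c * (1 - (cmod z)^2) \<le> 1 - (cmod (u z))^2" .
  qed
qed

lemma nonpos_if_le_eps_mult:
  fixes x K :: real
  assumes "\<And>e. 0 < e \<Longrightarrow> e \<le> 1 \<Longrightarrow> x \<le> e * K"
  shows "x \<le> 0"
proof (rule ccontr)
  assume "\<not> x \<le> 0"
  then have x: "x > 0" by simp
  have K: "K \<ge> x" using assms[of 1] by simp
  define e where "e = min 1 (x / (2*K))"
  have e: "0 < e" "e \<le> 1" using x K unfolding e_def by auto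
  have "x \<le> e * K" using assms e by blast
  also have "\<dots> \<le> (x / (2*K)) * K" using K x unfolding e_def by (intro mult_right_mono) auto
  also have "\<dots> = x / 2" using K x by simp
  finally show False using x by simp
qed

lemma Complex_tangent_direction_le:
  assumes "0 < e" "e \<le> 1" "r = 1 \<or> r = -1"
  shows "cmod (1 + Complex (- (e^2)) (r * e)) \<le> 1" and "(cmod (Complex (- (e^2)) (r * e)))^2 \<le> 2 * e^2"
proof -
  have "(cmod (1 + Complex (- (e^2)) (r * e)))^2 = (1 - e^2)^2 + e^2"
    unfolding cmod_power2 using assms(3) by (auto simp: power2_eq_square)
  also have "\<dots> \<le> 1" using assms mult_le_one[of e e] by (simp add: power2_eq_square algebra_simps)
  finally show "cmod (1 + Complex (- (e^2)) (r * e)) \<le> 1" by (simp add: power_le_one_iff)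
  have "(cmod (Complex (- (e^2)) (r * e)))^2 = e^4 + e^2"
    unfolding cmod_power2 using assms(3) by (auto simp: power2_eq_square numeral_eq_Suc)
  also have "\<dots> \<le> 2 * e^2" using assms by (simp add: power2_eq_square numeral_eq_Suc mult_le_one)
  finally show "(cmod (Complex (- (e^2)) (r * e)))^2 \<le> 2 * e^2" .
qed

text \<open>The admissible sigma form the disc |1 + sigma| <= 1, which contains the negative reals and is
  tangent to the imaginary axis at 0; testing sigma = -e^2 +- i e forces Im g = 0.\<close>
lemma nonneg_real_if_Re_mult_le_quadratic:
  fixes g :: complex
  assumes "0 \<le> M" and quad: "\<And>\<sigma>. cmod (1 + \<sigma>) \<le> 1 \<Longrightarrow> Re (\<sigma> * g) \<le> M * (cmod \<sigma>)^2"
  shows "Im g = 0" and "0 \<le> Re g"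
proof -
  define K where "K = 2 * M + cmod g"
  have Im_bound: "- Im g \<le> e * K \<and> Im g \<le> e * K" if e: "0 < e" "e \<le> 1" for e
  proof -
    have "Re (Complex (- (e^2)) (r * e) * g) \<le> M * (2 * e^2)" if "r = 1 \<or> r = -1" for r
      using quad[OF Complex_tangent_direction_le(1)[OF e that]] Complex_tangent_direction_le(2)[OF e that]
        \<open>0 \<le> M\<close> by (smt (verit) mult_left_mono)
    from this[of 1] this[of "-1"]
    have "- (e^2) * Re g - e * Im g \<le> M * (2 * e^2)" "- (e^2) * Re g + e * Im g \<le> M * (2 * e^2)"
      by auto
    moreover have "\<bar>e^2 * Re g\<bar> \<le> e^2 * cmod g"
      using abs_Re_le_cmod[of g] by (simp add: abs_mult mult_left_mono)
    ultimately have "e * (- Im g) \<le> e * (e * K)" "e * Im g \<le> e * (e * K)"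
      unfolding K_def by (simp_all add: power2_eq_square algebra_simps abs_le_iff)
    then show ?thesis using e by (simp only: mult_le_cancel_left_pos)
  qed
  have "- Im g \<le> 0" "Im g \<le> 0" by (rule nonpos_if_le_eps_mult[of _ K], use Im_bound in auto)+
  then show "Im g = 0" by simp
  have "- Re g \<le> e * M" if e: "0 < e" "e \<le> 1" for e
  proof -
    have "cmod (1 + (- of_real e)) \<le> 1" using e by (simp add: norm_radial_point[of 1, simplified])
    from quad[OF this] have "e * (- Re g) \<le> e * (e * M)" by (simp add: power2_eq_square algebra_simps)
    then show ?thesis using e by (simp only: mult_le_cancel_left_pos)
  qed
  then have "- Re g \<le> 0" by (intro nonpos_if_le_eps_mult[of _ M]) auto
  then show "0 \<le> Re g" by simp
qed

text \<open>By Schwarz--Pick, 1 - |u| decays at most linearly towards the boundary.\<close>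
lemma holomorphic_self_map_no_quadratic_contact:
  assumes hol: "u holomorphic_on ball 0 1" and ub: "\<forall>z\<in>ball 0 1. cmod (u z) < 1"
    and \<eta>: "cmod \<eta> = 1"
  shows "\<not> (\<forall>e. 0 < e \<and> e \<le> 1 \<longrightarrow> cmod (u ((1 - of_real e) * \<eta>) - 1) \<le> M * e^2)"
proof
  assume contact: "\<forall>e. 0 < e \<and> e \<le> 1 \<longrightarrow> cmod (u ((1 - of_real e) * \<eta>) - 1) \<le> M * e^2"
  obtain c where c: "c > 0" "\<forall>z\<in>ball 0 1. c * (1 - (cmod z)^2) \<le> 1 - (cmod (u z))^2"
    using Schwarz_Pick_lower_bound[OF hol ub] by blast
  have "c \<le> e * (2 * M)" if e: "0 < e" "e \<le> 1" for e
  proof -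
    define z where "z = (1 - of_real e) * \<eta>"
    have nz: "cmod z = 1 - e" unfolding z_def using e \<eta> by (simp add: norm_radial_point)
    then have "z \<in> ball 0 1" using e by simp
    have "c * e \<le> c * (1 - (cmod z)^2)"
      using c(1) e unfolding nz by (intro mult_left_mono) (auto simp: power2_eq_square algebra_simps)
    also have "\<dots> \<le> 1 - (cmod (u z))^2" using c(2) \<open>z \<in> ball 0 1\<close> by blast
    also have "\<dots> \<le> 2 * (1 - cmod (u z))"
      using zero_le_power2[of "1 - cmod (u z)"] by (simp add: power2_eq_square algebra_simps)
    also have "\<dots> \<le> 2 * cmod (u z - 1)"
      using norm_triangle_ineq2[of 1 "u z"] by (simp add: norm_minus_commute)
    also have "\<dots> \<le> 2 * (M * e^2)" using contact e unfolding z_def by simp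
    finally have "e * c \<le> e * (e * (2 * M))" by (simp add: power2_eq_square mult_ac)
    then show ?thesis using e by (simp only: mult_le_cancel_left_pos)
  qed
  then have "c \<le> 0" by (intro nonpos_if_le_eps_mult[of _ "2 * M"]) auto
  then show False using c by simp
qed

text \<open>The Hopf lemma for the self-map u = cinner (f -) p of the disc, which has u eta = 1:
  cinner (Df eta eta) p is the radial derivative of u at eta.\<close>
lemma boundary_derivative_positive:
  fixes f :: "complex \<Rightarrow> complex^'n" and Df :: "complex \<Rightarrow> (complex \<Rightarrow>\<^sub>L (complex^'n))"
  assumes hol: "\<forall>i. (\<lambda>z. f z $ i) holomorphic_on ball 0 1"
    and Df: "\<forall>x\<in>cball 0 1. (f has_derivative blinfun_apply (Df x)) (at x within cball 0 1)"
    and cDf: "continuous_on (cball 0 1) Df" and "0 \<le> M"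
    and taylor: "\<forall>x\<in>cball 0 1. \<forall>y\<in>cball 0 1. norm (f y - f x - Df x (y - x)) \<le> M * (norm (y - x))^2"
    and fb: "\<forall>z\<in>ball 0 1. norm (f z) < 1" and fc: "\<forall>z\<in>cball 0 1. norm (f z) \<le> 1"
    and \<eta>: "cmod \<eta> = 1" and p: "f \<eta> = p" "norm p = 1"
  obtains \<gamma> where "0 < \<gamma>" "cinner (Df \<eta> \<eta>) p = of_real \<gamma>"
proof -
  define g where "g = cinner (Df \<eta> \<eta>) p"
  note expansion = cinner_radial_taylor(1)[OF hol Df cDf taylor \<eta> p, folded g_def]
  have "Re (\<sigma> * g) \<le> M * (cmod \<sigma>)^2" if \<sigma>: "cmod (1 + \<sigma>) \<le> 1" for \<sigma>
  proof -
    have "norm (f ((1 + \<sigma>) * \<eta>)) \<le> 1" using fc \<sigma> \<eta> by (simp add: norm_mult)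
    then have "Re (cinner (f ((1 + \<sigma>) * \<eta>)) p) \<le> 1"
      using complex_Re_le_cmod cmod_cinner_unit_le[OF p(2)] by (meson order_trans)
    moreover have "Re (\<sigma> * g) = Re (cinner (f ((1 + \<sigma>) * \<eta>)) p) - 1
        - Re (cinner (f ((1 + \<sigma>) * \<eta>)) p - (1 + \<sigma> * g))" by simp
    ultimately show ?thesis
      using expansion[OF \<sigma>] abs_Re_le_cmod[of "cinner (f ((1 + \<sigma>) * \<eta>)) p - (1 + \<sigma> * g)"]
      by linarith
  qed
  then have "Im g = 0" "0 \<le> Re g" using nonneg_real_if_Re_mult_le_quadratic \<open>0 \<le> M\<close> by blast+
  then have g: "g = of_real (Re g)" by (simp add: complex_eq_iff)
  have "Re g \<noteq> 0"
  proof
    assume "Re g = 0"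
    then have "cmod (cinner (f ((1 - of_real e) * \<eta>)) p - 1) \<le> M * e^2" if "0 < e" "e \<le> 1" for e
      using expansion[of "- of_real e"] that g by (simp add: norm_radial_point[of 1, simplified])
    moreover have "(\<lambda>z. cinner (f z) p) holomorphic_on ball 0 1"
      unfolding cinner_def using hol by (intro holomorphic_intros) auto
    moreover have "\<forall>z\<in>ball 0 1. cmod (cinner (f z) p) < 1"
      using cmod_cinner_unit_le[OF p(2)] fb le_less_trans by blast
    ultimately show False using holomorphic_self_map_no_quadratic_contact[OF _ _ \<eta>] by blast
  qed
  with \<open>0 \<le> Re g\<close> have "0 < Re g" by simp
  from that[of "Re g"] this g show ?thesis unfolding g_def by blast
qed

text \<open>The speed c = 1 / gamma normalises the radial derivative to 1, so that two boundary points
  with the same image can be approached at matching rates.\<close>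
lemma radial_expansion_at_boundary:
  fixes f :: "complex \<Rightarrow> complex^'n"
  assumes hol: "\<forall>i. (\<lambda>z. f z $ i) holomorphic_on ball 0 1" and C2: "C2_on_closed_disc f"
    and fb: "\<forall>z\<in>ball 0 1. norm (f z) < 1"
    and \<eta>: "cmod \<eta> = 1" and p: "f \<eta> = p" "norm p = 1"
  obtains c L M where "0 < c" "0 \<le> L" "0 \<le> M"
    "\<And>s. 0 < s \<Longrightarrow> c * s \<le> 1 \<Longrightarrow> norm (f ((1 - of_real (c * s)) * \<eta>) - p) \<le> L * s"
    "\<And>s. 0 < s \<Longrightarrow> c * s \<le> 1 \<Longrightarrow>
       cmod (cinner (f ((1 - of_real (c * s)) * \<eta>)) p - (1 - of_real s)) \<le> M * s^2"
proof -
  obtain Df M where Df: "\<forall>x\<in>cball 0 1. (f has_derivative blinfun_apply (Df x)) (at x within cball 0 1)"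
    and cDf: "continuous_on (cball 0 1) Df" and "0 \<le> M"
    and taylor: "\<forall>x\<in>cball 0 1. \<forall>y\<in>cball 0 1. norm (f y - f x - Df x (y - x)) \<le> M * (norm (y - x))^2"
    using C2_on_closed_disc_taylor[OF C2] by blast
  have "\<forall>z\<in>cball 0 1. norm (f z) \<le> 1"
    using continuous_on_closure_norm_le[of "ball 0 1" f] C2_on_closed_disc_continuous_on[OF C2] fb
    by (simp add: less_imp_le)
  then obtain \<gamma> where "0 < \<gamma>" and \<gamma>: "cinner (Df \<eta> \<eta>) p = of_real \<gamma>"
    using boundary_derivative_positive[OF hol Df cDf \<open>0 \<le> M\<close> taylor fb _ \<eta> p] by blast
  define c where "c = 1 / \<gamma>"
  have "0 < c" unfolding c_def using \<open>0 < \<gamma>\<close> by simp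
  show ?thesis
  proof (rule that[OF \<open>0 < c\<close>, of "(norm (Df \<eta>) + M) * c" "M * c^2"])
    fix s :: real assume s: "0 < s" "c * s \<le> 1"
    have "0 < c * s" using s \<open>0 < c\<close> by simp
    then have "cmod (1 + - of_real (c * s)) \<le> 1"
      using norm_radial_point[of 1 "c * s"] s by simp
    note expansion = cinner_radial_taylor[OF hol Df cDf taylor \<eta> p this]
    have "norm (f ((1 - of_real (c * s)) * \<eta>) - p) \<le> norm (Df \<eta>) * (c * s) + M * (c * s)^2"
      using expansion(2) \<open>0 < c\<close> s(1) by (simp add: norm_mult)
    also have "M * (c * s)^2 \<le> M * (c * s)"
      using s \<open>0 < c * s\<close> \<open>0 \<le> M\<close> by (simp add: power2_eq_square mult_left_le_one_le mult_left_mono)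
    finally show "norm (f ((1 - of_real (c * s)) * \<eta>) - p) \<le> (norm (Df \<eta>) + M) * c * s"
      by (simp add: algebra_simps)
    have "c * s * \<gamma> = s" unfolding c_def using \<open>0 < \<gamma>\<close> by simp
    then have linear_term: "1 + - of_real (c * s) * cinner (Df \<eta> \<eta>) p = 1 - (of_real s :: complex)"
      unfolding \<gamma> by (metis of_real_mult mult_minus_left diff_conv_add_uminus)
    have radius: "1 + - of_real (c * s) = 1 - (of_real (c * s) :: complex)" by simp
    have error_term: "M * (cmod (- of_real (c * s) :: complex))^2 = M * c^2 * s^2"
      by (simp only: norm_minus_cancel norm_of_real power2_abs power_mult_distrib mult.assoc)
    show "cmod (cinner (f ((1 - of_real (c * s)) * \<eta>)) p - (1 - of_real s)) \<le> M * c^2 * s^2"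
      using expansion(1) unfolding linear_term radius error_term .
  qed (use \<open>0 < c\<close> \<open>0 \<le> M\<close> in auto)
qed

section \<open>The kernel gap along radii\<close>

text \<open>Writing x = p + X and y = p + Y, the left-hand side is a polynomial in X, Y whose terms of
  order at most two reduce to |cinner X p - cinner Y p|^2.\<close>
lemma cmod_one_minus_cinner_square_approx:
  fixes x y p :: "complex^'n" and a :: real
  assumes p: "norm p = 1" and "0 \<le> a" and x: "norm (x - p) \<le> a" and y: "norm (y - p) \<le> a"
  shows "\<bar>(cmod (1 - cinner x y))^2 - (1 - (norm x)^2) * (1 - (norm y)^2)
           - (cmod (cinner x p - cinner y p))^2\<bar> \<le> 8 * a^3 + 2 * a^4"
proof -
  define X Y where "X = x - p" and "Y = y - p"
  define P R W where "P = cinner X p" and "R = cinner Y p" and "W = cinner X Y"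
  have xy: "x = p + X" "y = p + Y" unfolding X_def Y_def by simp_all
  have "cinner p p = 1" using p by (simp add: cinner_self)
  then have "1 - cinner x y = - (P + cnj R + W)" and "cinner x p - cinner y p = P - R"
    unfolding xy P_def R_def W_def by (simp_all add: cinner_add_left cinner_add_right cnj_cinner)
  moreover have "1 - (norm x)^2 = - (2 * Re P + (norm X)^2)" "1 - (norm y)^2 = - (2 * Re R + (norm Y)^2)"
    unfolding xy P_def R_def W_def norm_add_unit_square[OF p] by simp_all
  moreover have "(cmod (P + cnj R + W))^2 - (2 * Re P + (norm X)^2) * (2 * Re R + (norm Y)^2) - (cmod (P - R))^2
     = 2 * Re ((P + cnj R) * cnj W) + (cmod W)^2 - 2 * (Re P * (norm Y)^2) - 2 * (Re R * (norm X)^2)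
       - (norm X)^2 * (norm Y)^2"
    unfolding cmod_power2 by (simp add: power2_eq_square algebra_simps)
  ultimately have expand: "(cmod (1 - cinner x y))^2 - (1 - (norm x)^2) * (1 - (norm y)^2)
           - (cmod (cinner x p - cinner y p))^2
     = 2 * Re ((P + cnj R) * cnj W) + (cmod W)^2 - 2 * (Re P * (norm Y)^2) - 2 * (Re R * (norm X)^2)
       - (norm X)^2 * (norm Y)^2"
    by (simp only: norm_minus_cancel)
  have X: "norm X \<le> a" and Y: "norm Y \<le> a" using x y unfolding X_def Y_def .
  have P: "cmod P \<le> a" and R: "cmod R \<le> a"
    unfolding P_def R_def W_def using cmod_cinner_unit_le[OF p] X Y order_trans by blast+
  have W: "cmod W \<le> a^2"
    unfolding P_def R_def W_def power2_eq_square
    using cmod_cinner_le[of X Y] mult_mono[OF X Y] \<open>0 \<le> a\<close> by fastforce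
  have "\<bar>Re ((P + cnj R) * cnj W)\<bar> \<le> (a + a) * a^2"
    using abs_Re_le_cmod[of "(P + cnj R) * cnj W"] norm_triangle_ineq[of P "cnj R"] P R W \<open>0 \<le> a\<close>
    by (smt (verit, best) complex_mod_cnj mult_mono norm_ge_zero norm_mult)
  moreover have "(cmod W)^2 \<le> (a^2)^2" using W by (intro power_mono) auto
  moreover have "\<bar>Re P * (norm Y)^2\<bar> \<le> a * a^2" "\<bar>Re R * (norm X)^2\<bar> \<le> a * a^2"
    using abs_Re_le_cmod[of P] abs_Re_le_cmod[of R] P R power_mono[OF X] power_mono[OF Y] \<open>0 \<le> a\<close>
    by (auto simp: abs_mult intro!: mult_mono)
  moreover have "(norm X)^2 * (norm Y)^2 \<le> a^2 * a^2"
    using power_mono[OF X] power_mono[OF Y] by (intro mult_mono) auto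
  moreover have "(a + a) * a^2 = 2 * a^3" "(a^2)^2 = a^4" "a * a^2 = a^3" "a^2 * a^2 = a^4"
    by (simp_all add: power2_eq_square power3_eq_cube power4_eq_xxxx)
  moreover have "0 \<le> (cmod W)^2" "0 \<le> (norm X)^2 * (norm Y)^2" by simp_all
  ultimately show ?thesis unfolding expand by (smt (verit))
qed

lemma one_minus_norm_square_ge:
  fixes x p :: "complex^'n"
  assumes p: "norm p = 1" and "0 \<le> s"
    and x: "cmod (cinner x p - (1 - of_real (s * \<gamma>))) \<le> M * s^2" "norm (x - p) \<le> L * s"
    and small: "s * (2 * M + L^2) \<le> \<gamma>"
  shows "\<gamma> * s \<le> 1 - (norm x)^2"
proof -
  have "Re (cinner x p) - (1 - s * \<gamma>) \<le> M * s^2"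
    using x(1) complex_Re_le_cmod[of "cinner x p - (1 - of_real (s * \<gamma>))"] by simp
  moreover have "(norm (x - p))^2 \<le> (L * s)^2" using x(2) by (intro power_mono) auto
  moreover have "(norm x)^2 = 1 + 2 * (Re (cinner x p) - 1) + (norm (x - p))^2"
    using norm_add_unit_square[OF p, of "x - p"] \<open>norm p = 1\<close>
    by (simp add: cinner_diff_left cinner_self)
  moreover have "(2 * M + L^2) * s^2 \<le> \<gamma> * s"
    using mult_right_mono[OF small \<open>0 \<le> s\<close>] by (simp add: power2_eq_square mult_ac)
  ultimately show ?thesis by (simp add: power_mult_distrib algebra_simps)
qed

lemma gap_numerator_le:
  fixes x y p :: "complex^'n"
  assumes p: "norm p = 1" and s: "0 < s" "s \<le> 1" and "0 \<le> L"
    and hX: "norm (x - p) \<le> L * s" and hY: "norm (y - p) \<le> L * s"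
    and hP: "cmod (cinner x p - cinner y p) \<le> K * s^2"
  shows "\<bar>(cmod (1 - cinner x y))^2 - (1 - (norm x)^2) * (1 - (norm y)^2)\<bar>
    \<le> (K^2 + 8 * L^3 + 2 * L^4) * s^3"
proof -
  define N where "N = (cmod (1 - cinner x y))^2 - (1 - (norm x)^2) * (1 - (norm y)^2)"
  have "\<bar>N - (cmod (cinner x p - cinner y p))^2\<bar> \<le> 8 * (L * s)^3 + 2 * (L * s)^4"
    unfolding N_def using cmod_one_minus_cinner_square_approx[OF p _ hX hY] \<open>0 \<le> L\<close> s by simp
  also have "\<dots> \<le> (8 * L^3 + 2 * L^4) * s^3"
    using s \<open>0 \<le> L\<close> mult_left_le[of s "L^4 * s^3"]
    by (simp add: power_mult_distrib power4_eq_xxxx power3_eq_cube algebra_simps)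
  finally have "\<bar>N\<bar> \<le> (cmod (cinner x p - cinner y p))^2 + (8 * L^3 + 2 * L^4) * s^3"
    using zero_le_power2[of "cmod (cinner x p - cinner y p)"] by arith
  moreover have "(cmod (cinner x p - cinner y p))^2 \<le> K^2 * s^3"
  proof -
    have "(cmod (cinner x p - cinner y p))^2 \<le> (K * s^2)^2" using hP by (intro power_mono) auto
    also have "\<dots> = K^2 * s^3 * s" by (simp add: power2_eq_square power3_eq_cube algebra_simps)
    also have "\<dots> \<le> K^2 * s^3" using s by (intro mult_left_le) auto
    finally show ?thesis .
  qed
  ultimately show ?thesis unfolding N_def by (simp add: algebra_simps)
qed

text \<open>The numerator of the gap is O(s^3), while both factors of its denominator are bounded below
  by multiples of s.\<close>
lemma gap_le_of_numerator_le:
  fixes x y :: "complex^'n"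
  assumes y: "norm y \<le> 1" and "0 < \<gamma>" and "0 < s" and hD: "\<gamma> * s \<le> 1 - (norm x)^2"
    and N: "\<bar>(cmod (1 - cinner x y))^2 - (1 - (norm x)^2) * (1 - (norm y)^2)\<bar> \<le> C * s^3"
  shows "\<bar>1 / (1 - (norm x)^2) - (1 - (norm y)^2) / (cmod (1 - cinner x y))^2\<bar> \<le> 4 * C / \<gamma>^3"
proof -
  define D1 D2 where "D1 = 1 - (norm x)^2" and "D2 = 1 - (norm y)^2"
  define m where "m = cmod (1 - cinner x y)"
  have D1: "\<gamma> * s \<le> D1" "0 < D1"
    using hD mult_pos_pos[OF \<open>0 < \<gamma>\<close> \<open>0 < s\<close>] unfolding D1_def by linarith+
  have "1 - norm x \<le> m"
    using cmod_cinner_le[of x y] y norm_triangle_ineq2[of 1 "cinner x y"] mult_left_le[of "norm y" "norm x"]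
    unfolding m_def by simp
  moreover have "D1 \<le> 2 * (1 - norm x)"
    using zero_le_power2[of "1 - norm x"] unfolding D1_def by (simp add: power2_eq_square algebra_simps)
  ultimately have m: "D1 / 2 \<le> m" by simp
  have "\<bar>1 / D1 - D2 / m^2\<bar> = \<bar>m^2 - D1 * D2\<bar> / (D1 * m^2)"
    using D1 m by (simp add: field_simps abs_divide)
  also have "\<dots> \<le> (C * s^3) / ((\<gamma> * s) * (\<gamma> * s / 2)^2)"
  proof (rule frac_le)
    show "(\<gamma> * s) * (\<gamma> * s / 2)^2 \<le> D1 * m^2"
      using m D1 \<open>0 < \<gamma>\<close> \<open>0 < s\<close> by (intro mult_mono power_mono) auto
    show "\<bar>m^2 - D1 * D2\<bar> \<le> C * s^3" using N unfolding D1_def D2_def m_def .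
    then show "0 \<le> C * s^3" by (rule order_trans[OF abs_ge_zero])
  qed (use \<open>0 < \<gamma>\<close> \<open>0 < s\<close> in simp)
  also have "\<dots> = 4 * C / \<gamma>^3"
    using \<open>0 < \<gamma>\<close> \<open>0 < s\<close> by (simp add: field_simps power2_eq_square power3_eq_cube)
  finally show ?thesis unfolding D1_def D2_def m_def .
qed

lemma kf_gap_bound_from_radial_expansions:
  fixes f :: "complex \<Rightarrow> complex^'n"
  assumes p: "norm p = 1" and "norm (f z) < 1" "norm (f w) < 1"
    and s: "0 < s" and "0 \<le> L" "0 \<le> M" and small: "s * (2 * M + L^2 + 1) \<le> 1"
    and hX: "norm (f z - p) \<le> L * s" and hY: "norm (f w - p) \<le> L * s"
    and ex: "cmod (cinner (f z) p - (1 - of_real s)) \<le> M * s^2"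
    and ey: "cmod (cinner (f w) p - (1 - of_real s)) \<le> M * s^2"
  shows "\<bar>kernel_gap (kf f) z w (kf f z w / kf f w w)\<bar> \<le> 4 * ((2 * M)^2 + 8 * L^3 + 2 * L^4)"
proof -
  have "s * 1 \<le> s * (2 * M + L^2 + 1)"
    using s \<open>0 \<le> M\<close> by (intro mult_left_mono) auto
  then have "s \<le> 1" and small': "s * (2 * M + L^2) \<le> 1 * 1" using small s by (simp_all add: algebra_simps)
  have "cmod (cinner (f z) p - cinner (f w) p) \<le> (2 * M) * s^2"
    using norm_triangle_ineq4[of "cinner (f z) p - (1 - of_real s)" "cinner (f w) p - (1 - of_real s)"] ex ey
    by simp
  from gap_numerator_le[OF p s \<open>s \<le> 1\<close> \<open>0 \<le> L\<close> hX hY this]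
  have N: "\<bar>(cmod (1 - cinner (f z) (f w)))^2 - (1 - (norm (f z))^2) * (1 - (norm (f w))^2)\<bar>
    \<le> ((2 * M)^2 + 8 * L^3 + 2 * L^4) * s^3" .
  have "cmod (cinner (f z) p - (1 - of_real (s * 1))) \<le> M * s^2" using ex by simp
  from one_minus_norm_square_ge[OF p less_imp_le[OF s] this hX] small'
  have "1 * s \<le> 1 - (norm (f z))^2" by simp
  from gap_le_of_numerator_le[OF less_imp_le[OF \<open>norm (f w) < 1\<close>] zero_less_one s this N]
  show ?thesis using kernel_gap_kf[of f z w] \<open>norm (f z) < 1\<close> \<open>norm (f w) < 1\<close> by simp
qed

lemma filterlim_cmod_Ln_at_0: "filterlim (\<lambda>w. cmod (Ln w)) at_top (at 0)"
proof -
  have "filterlim (\<lambda>w::complex. cmod w) (at_right 0) (at 0)"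
    by (rule tendsto_imp_filterlim_at_right) (auto intro!: tendsto_eq_intros simp: eventually_at_filter)
  then have "filterlim (\<lambda>w. ln (cmod w)) at_bot (at 0)"
    by (rule filterlim_compose[OF ln_at_0])
  then have "filterlim (\<lambda>w. - ln (cmod w)) at_top (at 0)"
    by (simp add: filterlim_uminus_at_bot)
  then show ?thesis
  proof (rule filterlim_at_top_mono)
    show "\<forall>\<^sub>F w in at 0. - ln (cmod w) \<le> cmod (Ln w)"
      unfolding eventually_at_filter
      by (intro always_eventually allI impI) (metis Re_Ln abs_Re_le_cmod abs_le_iff)
  qed
qed

lemma tendsto_radial_point:
  fixes \<eta> :: complex and c :: real
  shows "((\<lambda>s. (1 - of_real (c * s)) * \<eta>) \<longlongrightarrow> \<eta>) (at_right 0)"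
proof -
  have "((\<lambda>s. (1 - of_real (c * s)) * \<eta>) \<longlongrightarrow> (1 - of_real (c * 0)) * \<eta>) (at_right 0)"
    by (intro tendsto_intros)
  then show ?thesis by simp
qed

lemma eventually_at_right_0_mult_le: "\<forall>\<^sub>F s in at_right 0. (c::real) * s \<le> 1"
proof -
  have "((\<lambda>s. c * s) \<longlongrightarrow> c * 0) (at_right 0)" by (intro tendsto_intros)
  from order_tendstoD(2)[OF this, of 1] show ?thesis by (auto elim: eventually_mono)
qed

lemma eventually_radial_point_in_ball:
  assumes "cmod \<eta> = 1" and "0 < c"
  shows "\<forall>\<^sub>F s in at_right 0. (1 - of_real (c * s)) * \<eta> \<in> ball 0 1"
  using eventually_at_right_less eventually_at_right_0_mult_le[of c]
proof eventually_elim
  case (elim s)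
  then show ?case using radial_point_in_ball[OF assms(1), of "c * s"] \<open>0 < c\<close> by simp
qed

lemma radial_Ln_blow_up:
  fixes f :: "complex \<Rightarrow> complex^'n"
  assumes f: "continuous_on (cball 0 1) f" and fb: "\<forall>z\<in>ball 0 1. norm (f z) < 1"
    and \<eta>: "cmod \<eta> = 1" "f \<eta> = p" and p: "norm p = 1" and "0 < c"
  shows "filterlim (\<lambda>s. cmod (Ln (1 - cinner (f ((1 - of_real (c * s)) * \<eta>)) p))) at_top (at_right 0)"
proof (rule filterlim_compose[OF filterlim_cmod_Ln_at_0 filterlim_atI])
  have in_ball: "\<forall>\<^sub>F s in at_right 0. (1 - of_real (c * s)) * \<eta> \<in> ball 0 1"
    by (rule eventually_radial_point_in_ball[OF \<eta>(1) \<open>0 < c\<close>])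
  then have "\<forall>\<^sub>F s in at_right 0. (1 - of_real (c * s)) * \<eta> \<in> cball 0 1"
    by (auto elim: eventually_mono)
  from continuous_on_tendsto_compose[OF f tendsto_radial_point _ this]
  have "((\<lambda>s. f ((1 - of_real (c * s)) * \<eta>)) \<longlongrightarrow> p) (at_right 0)" using \<eta> by simp
  moreover have "cinner p p = 1" using p by (simp add: cinner_self)
  ultimately show "((\<lambda>s. 1 - cinner (f ((1 - of_real (c * s)) * \<eta>)) p) \<longlongrightarrow> 0) (at_right 0)"
    unfolding cinner_def by (auto intro!: tendsto_eq_intros)
  have "1 - cinner (f z) p \<noteq> 0" if "z \<in> ball 0 1" for z
    using fb that cmod_cinner_unit_le[OF p, of "f z"] by force
  with in_ball show "\<forall>\<^sub>F s in at_right 0. 1 - cinner (f ((1 - of_real (c * s)) * \<eta>)) p \<noteq> 0"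
    by (auto elim: eventually_mono)
qed

lemma eq_if_difference_times_unbounded_bounded:
  fixes \<psi> :: "'a::topological_space \<Rightarrow> 'b::real_normed_vector"
  assumes "F \<noteq> bot" and \<psi>: "continuous_on S \<psi>" "\<xi> \<in> S" "\<zeta> \<in> S"
    and z: "(z \<longlongrightarrow> \<xi>) F" and w: "(w \<longlongrightarrow> \<zeta>) F" and "\<forall>\<^sub>F s in F. z s \<in> S" "\<forall>\<^sub>F s in F. w s \<in> S"
    and G: "filterlim G at_top F"
    and bound: "\<forall>\<^sub>F s in F. norm (\<psi> (z s) - \<psi> (w s)) * G s \<le> K"
  shows "\<psi> \<xi> = \<psi> \<zeta>"
proof -
  have "((\<lambda>s. \<psi> (z s) - \<psi> (w s)) \<longlongrightarrow> \<psi> \<xi> - \<psi> \<zeta>) F"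
    using continuous_on_tendsto_compose[OF \<psi>(1) z \<psi>(2)] continuous_on_tendsto_compose[OF \<psi>(1) w \<psi>(3)]
      assms(7,8) by (intro tendsto_diff)
  moreover have "((\<lambda>s. \<psi> (z s) - \<psi> (w s)) \<longlongrightarrow> 0) F"
  proof (rule Lim_null_comparison)
    have "\<forall>\<^sub>F s in F. 0 < G s" using eventually_compose_filterlim[OF eventually_gt_at_top G] .
    with bound show "\<forall>\<^sub>F s in F. norm (\<psi> (z s) - \<psi> (w s)) \<le> K / G s"
      by eventually_elim (simp add: pos_le_divide_eq)
    show "((\<lambda>s. K / G s) \<longlongrightarrow> 0) F"
      by (rule tendsto_divide_0[OF tendsto_const filterlim_at_top_imp_at_infinity[OF G]])
  qed
  ultimately have "\<psi> \<xi> - \<psi> \<zeta> = 0" using tendsto_unique[OF \<open>F \<noteq> bot\<close>] by blast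
  then show ?thesis by simp
qed

lemma kf_gap_bounded_on_radii:
  fixes f :: "complex \<Rightarrow> complex^'n"
  assumes hol: "\<forall>i. (\<lambda>z. f z $ i) holomorphic_on ball 0 1" and C2: "C2_on_closed_disc f"
    and fb: "\<forall>z\<in>ball 0 1. norm (f z) < 1"
    and \<xi>: "cmod \<xi> = 1" "f \<xi> = p" and \<zeta>: "cmod \<zeta> = 1" "f \<zeta> = p" and p: "norm p = 1"
  obtains c1 c2 B where "0 < c1" "0 < c2"
    "\<forall>\<^sub>F s in at_right 0. \<exists>t.
       \<bar>kernel_gap (kf f) ((1 - of_real (c1 * s)) * \<xi>) ((1 - of_real (c2 * s)) * \<zeta>) t\<bar> \<le> B"
proof -
  obtain c1 L1 M1 where "0 < c1" "0 \<le> L1" "0 \<le> M1"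
    and x: "\<And>s. 0 < s \<Longrightarrow> c1 * s \<le> 1 \<Longrightarrow> norm (f ((1 - of_real (c1 * s)) * \<xi>) - p) \<le> L1 * s"
      "\<And>s. 0 < s \<Longrightarrow> c1 * s \<le> 1 \<Longrightarrow>
         cmod (cinner (f ((1 - of_real (c1 * s)) * \<xi>)) p - (1 - of_real s)) \<le> M1 * s^2"
    using radial_expansion_at_boundary[OF hol C2 fb \<xi> p] by blast
  obtain c2 L2 M2 where "0 < c2" "0 \<le> L2" "0 \<le> M2"
    and y: "\<And>s. 0 < s \<Longrightarrow> c2 * s \<le> 1 \<Longrightarrow> norm (f ((1 - of_real (c2 * s)) * \<zeta>) - p) \<le> L2 * s"
      "\<And>s. 0 < s \<Longrightarrow> c2 * s \<le> 1 \<Longrightarrow>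
         cmod (cinner (f ((1 - of_real (c2 * s)) * \<zeta>)) p - (1 - of_real s)) \<le> M2 * s^2"
    using radial_expansion_at_boundary[OF hol C2 fb \<zeta> p] by blast
  define L M where "L = L1 + L2" and "M = M1 + M2"
  have "0 \<le> L" "0 \<le> M" using \<open>0 \<le> L1\<close> \<open>0 \<le> L2\<close> \<open>0 \<le> M1\<close> \<open>0 \<le> M2\<close> unfolding L_def M_def by simp_all
  have "\<forall>\<^sub>F s in at_right 0. 0 < s \<and> c1 * s \<le> 1 \<and> c2 * s \<le> 1 \<and> s * (2 * M + L^2 + 1) \<le> 1"
    using eventually_at_right_less eventually_at_right_0_mult_le[of c1] eventually_at_right_0_mult_le[of c2]
      eventually_at_right_0_mult_le[of "2 * M + L^2 + 1"]
    by eventually_elim (simp add: mult.commute)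
  then have "\<forall>\<^sub>F s in at_right 0. \<exists>t.
      \<bar>kernel_gap (kf f) ((1 - of_real (c1 * s)) * \<xi>) ((1 - of_real (c2 * s)) * \<zeta>) t\<bar>
        \<le> 4 * ((2 * M)^2 + 8 * L^3 + 2 * L^4)"
  proof eventually_elim
    case (elim s)
    then have s: "0 < s" and "c1 * s \<le> 1" "c2 * s \<le> 1" "s * (2 * M + L^2 + 1) \<le> 1" by auto
    define z w where "z = (1 - of_real (c1 * s)) * \<xi>" and "w = (1 - of_real (c2 * s)) * \<zeta>"
    have "0 < c1 * s" "0 < c2 * s" using s \<open>0 < c1\<close> \<open>0 < c2\<close> by simp_all
    then have "z \<in> ball 0 1" "w \<in> ball 0 1"
      unfolding z_def w_def using radial_point_in_ball[OF \<xi>(1)] radial_point_in_ball[OF \<zeta>(1)]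
        \<open>c1 * s \<le> 1\<close> \<open>c2 * s \<le> 1\<close> by blast+
    have "L1 * s \<le> L * s" "L2 * s \<le> L * s" "M1 * s^2 \<le> M * s^2" "M2 * s^2 \<le> M * s^2"
      unfolding L_def M_def using s \<open>0 \<le> L1\<close> \<open>0 \<le> L2\<close> \<open>0 \<le> M1\<close> \<open>0 \<le> M2\<close>
      by (intro mult_right_mono; simp)+
    then have "norm (f z - p) \<le> L * s" "norm (f w - p) \<le> L * s"
      "cmod (cinner (f z) p - (1 - of_real s)) \<le> M * s^2"
      "cmod (cinner (f w) p - (1 - of_real s)) \<le> M * s^2"
      using x[OF s \<open>c1 * s \<le> 1\<close>] y[OF s \<open>c2 * s \<le> 1\<close>]
      unfolding z_def w_def by linarith+
    then have "\<bar>kernel_gap (kf f) z w (kf f z w / kf f w w)\<bar> \<le> 4 * ((2 * M)^2 + 8 * L^3 + 2 * L^4)"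
      using kf_gap_bound_from_radial_expansions[OF p _ _ s \<open>0 \<le> L\<close> \<open>0 \<le> M\<close>
          \<open>s * (2 * M + L^2 + 1) \<le> 1\<close>] fb \<open>z \<in> ball 0 1\<close> \<open>w \<in> ball 0 1\<close> by blast
    then show "\<exists>t. \<bar>kernel_gap (kf f) ((1 - of_real (c1 * s)) * \<xi>) ((1 - of_real (c2 * s)) * \<zeta>) t\<bar>
        \<le> 4 * ((2 * M)^2 + 8 * L^3 + 2 * L^4)"
      unfolding z_def w_def by blast
  qed
  with that \<open>0 < c1\<close> \<open>0 < c2\<close> show ?thesis by blast
qed

lemma Mf_radial_difference_bound:
  fixes f :: "complex \<Rightarrow> complex^'n"
  assumes hol: "\<forall>i. (\<lambda>z. f z $ i) holomorphic_on ball 0 1" and C2: "C2_on_closed_disc f"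
    and fb: "\<forall>z\<in>ball 0 1. norm (f z) < 1"
    and \<xi>: "cmod \<xi> = 1" "f \<xi> = p" and \<zeta>: "cmod \<zeta> = 1" "f \<zeta> = p" and p: "norm p = 1"
    and \<phi>: "\<phi> \<in> Mf f" "\<forall>w\<in>ball 0 1. cmod (\<phi> w) \<le> Mp"
  obtains c1 c2 K where "0 < c1" "0 < c2"
    "\<forall>\<^sub>F s in at_right 0. cmod (\<phi> ((1 - of_real (c1 * s)) * \<xi>) - \<phi> ((1 - of_real (c2 * s)) * \<zeta>))
       * cmod (Ln (1 - cinner (f ((1 - of_real (c1 * s)) * \<xi>)) p)) \<le> K"
proof -
  obtain c1 c2 B where "0 < c1" "0 < c2" and gap: "\<forall>\<^sub>F s in at_right 0. \<exists>t.
      \<bar>kernel_gap (kf f) ((1 - of_real (c1 * s)) * \<xi>) ((1 - of_real (c2 * s)) * \<zeta>) t\<bar> \<le> B"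
    using kf_gap_bounded_on_radii[OF hol C2 fb \<xi> \<zeta> p] by blast
  obtain K where "0 \<le> K" and K: "\<And>z w t. z \<in> ball 0 1 \<Longrightarrow> w \<in> ball 0 1 \<Longrightarrow>
      cmod (\<phi> z - \<phi> w) * cmod (Ln (1 - cinner (f z) p)) \<le> K * sqrt \<bar>kernel_gap (kf f) z w t\<bar>"
    using Mf_difference_times_Ln_le[OF \<phi> fb, of p] p by auto
  from gap eventually_radial_point_in_ball[OF \<xi>(1) \<open>0 < c1\<close>] eventually_radial_point_in_ball[OF \<zeta>(1) \<open>0 < c2\<close>]
  have "\<forall>\<^sub>F s in at_right 0. cmod (\<phi> ((1 - of_real (c1 * s)) * \<xi>) - \<phi> ((1 - of_real (c2 * s)) * \<zeta>))
       * cmod (Ln (1 - cinner (f ((1 - of_real (c1 * s)) * \<xi>)) p)) \<le> K * sqrt B"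
  proof eventually_elim
    case (elim s)
    then obtain t where "\<bar>kernel_gap (kf f) ((1 - of_real (c1 * s)) * \<xi>) ((1 - of_real (c2 * s)) * \<zeta>) t\<bar> \<le> B"
      by blast
    then show ?case using K[OF elim(2,3), of t] \<open>0 \<le> K\<close>
      by (smt (verit) mult_left_mono real_sqrt_le_mono)
  qed
  with that \<open>0 < c1\<close> \<open>0 < c2\<close> show ?thesis by blast
qed

theorem theorem2p4:
  fixes V :: "(complex^'n) set" and f :: "complex \<Rightarrow> complex^'n"
    and \<phi> \<psi> :: "complex \<Rightarrow> complex" and \<xi> \<zeta> :: complex
  assumes "analytic_disc_attached V f"
    and "\<xi> \<in> sphere 0 1" and "\<zeta> \<in> sphere 0 1" and "\<xi> \<noteq> \<zeta>"
    and "f \<xi> = f \<zeta>"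
    and "\<phi> \<in> Mf f"
    and "continuous_on (cball 0 1) \<psi>" and "\<forall>z\<in>ball 0 1. \<psi> z = \<phi> z"
  shows "\<psi> \<xi> = \<psi> \<zeta>"
proof -
  have hol: "\<forall>i. (\<lambda>z. f z $ i) holomorphic_on ball 0 1" and C2: "C2_on_closed_disc f"
    and fb: "\<forall>z\<in>ball 0 1. norm (f z) < 1" and sphere: "\<forall>x\<in>cball 0 1. norm (f x) = 1 \<longleftrightarrow> cmod x = 1"
    using assms(1) unfolding analytic_disc_attached_def by (auto simp: subset_iff)
  define p where "p = f \<xi>"
  have \<xi>: "cmod \<xi> = 1" "f \<xi> = p" and \<zeta>: "cmod \<zeta> = 1" "f \<zeta> = p" and "norm p = 1"
    using assms(2,3,5) sphere unfolding p_def by auto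
  obtain Mp where "\<forall>z\<in>cball 0 1. cmod (\<psi> z) \<le> Mp"
    using compact_imp_bounded[OF compact_continuous_image[OF assms(7) compact_cball]]
    unfolding bounded_iff by auto
  then have "\<forall>w\<in>ball 0 1. cmod (\<phi> w) \<le> Mp" using assms(8) by (metis ball_subset_cball subsetD)
  then obtain c1 c2 K where "0 < c1" "0 < c2" and bound: "\<forall>\<^sub>F s in at_right 0.
      cmod (\<phi> ((1 - of_real (c1 * s)) * \<xi>) - \<phi> ((1 - of_real (c2 * s)) * \<zeta>))
       * cmod (Ln (1 - cinner (f ((1 - of_real (c1 * s)) * \<xi>)) p)) \<le> K"
    using Mf_radial_difference_bound[OF hol C2 fb \<xi> \<zeta> \<open>norm p = 1\<close> assms(6)] by blast
  note in_ball = eventually_radial_point_in_ball[OF \<xi>(1) \<open>0 < c1\<close>] eventually_radial_point_in_ball[OF \<zeta>(1) \<open>0 < c2\<close>]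
  show ?thesis
  proof (rule eq_if_difference_times_unbounded_bounded[OF trivial_limit_at_right_real assms(7) _ _
        tendsto_radial_point tendsto_radial_point])
    from bound in_ball show "\<forall>\<^sub>F s in at_right 0. cmod (\<psi> ((1 - of_real (c1 * s)) * \<xi>) - \<psi> ((1 - of_real (c2 * s)) * \<zeta>))
       * cmod (Ln (1 - cinner (f ((1 - of_real (c1 * s)) * \<xi>)) p)) \<le> K"
      by eventually_elim (simp add: assms(8))
    show "filterlim (\<lambda>s. cmod (Ln (1 - cinner (f ((1 - of_real (c1 * s)) * \<xi>)) p))) at_top (at_right 0)"
      by (rule radial_Ln_blow_up[OF C2_on_closed_disc_continuous_on[OF C2] fb \<xi> \<open>norm p = 1\<close> \<open>0 < c1\<close>])
  qed (use in_ball \<xi> \<zeta> in \<open>auto elim: eventually_mono\<close>)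
qed

end
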